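(* Let $S$ be a complete starsemiring, let $n\ge 1$, let $\Gamma$ be an alphabet, and let $M\in (S^{n\times n})^{\Gamma^*\times\Gamma^*}$ be a pushdown transition matrix. Then for all $p\in\Gamma$ and $\pi\in\Gamma^*$, $$(M^* )_{p\pi,\epsilon}=(M^* )_{p,\epsilon}\,(M^* )_{\pi,\epsilon}.$$
   Context: A complete starsemiring is a semiring $S$ in which sums $\sum_{i\in I}s_i$ of arbitrary families (arbitrary index sets $I$) are defined, extending finite sums and satisfying the usual infinite associativity, commutativity and distributivity laws, and which is equipped with the star operation $s^*=\sum_{j\ge 0}s^j$. Matrices over $S$ (also with infinite index sets) are added and multiplied by the usual formulas, using these infinite sums. An element $M\in (S^{n\times n})^{\Gamma^*\times\Gamma^*}$ is a $\Gamma^*\times\Gamma^*$ matrix whose blocks $M_{\pi_1,\pi_2}$ are $n\times n$ matrices over $S$. Such an $M$ is a pushdown transition matrix if (i) for each $p\in\Gamma$ only finitely many blocks $M_{p,\pi}$, $\pi\in\Gamma^*$, are nonzero, and (ii) for all $\pi_1,\pi_2\in\Gamma^*$: $M_{\pi_1,\pi_2}=M_{p,\pi}$ if there are $p\in\Gamma$, $\pi,\pi'\in\Gamma^*$ with $\pi_1=p\pi'$ and $\pi_2=\pi\pi'$, and $M_{\pi_1,\pi_2}=0$ otherwise. $M^*=\sum_{m\ge0}M^m$, and $(M^* )_{\pi,\pi'}$ denotes its $(\pi,\pi')$-block, an $n\times n$ matrix; $\epsilon$ is the empty word. *)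

theory Defs
  imports Main "HOL-Library.Countable"
begin

text \<open>Families are indexed by subsets of nat; families over any countable type
are reindexed through to_nat (see gsum).\<close>

locale complete_semiring =
  fixes csum :: "(nat \<Rightarrow> 'a::semiring_1) \<Rightarrow> nat set \<Rightarrow> 'a"
  assumes csum_cong: "(\<And>i. i \<in> I \<Longrightarrow> f i = g i) \<Longrightarrow> csum f I = csum g I"
    and csum_empty: "csum f {} = 0"
    and csum_single: "csum f {i} = f i"
    and csum_pair: "i \<noteq> j \<Longrightarrow> csum f {i, j} = f i + f j"
    and csum_partition:
      "(\<forall>j\<in>J. \<forall>k\<in>J. j \<noteq> k \<longrightarrow> P j \<inter> P k = {}) \<Longrightarrow>
       csum f (\<Union>j\<in>J. P j) = csum (\<lambda>j. csum f (P j)) J"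
    and csum_distrib_left: "csum (\<lambda>i. a * f i) I = a * csum f I"
    and csum_distrib_right: "csum (\<lambda>i. f i * a) I = csum f I * a"

definition gsum :: "((nat \<Rightarrow> 'a) \<Rightarrow> nat set \<Rightarrow> 'a) \<Rightarrow> ('b::countable \<Rightarrow> 'a) \<Rightarrow> 'b set \<Rightarrow> 'a" where
  "gsum cs f I = cs (\<lambda>k. f (from_nat k)) (to_nat ` I)"

definition sstar :: "((nat \<Rightarrow> 'a::semiring_1) \<Rightarrow> nat set \<Rightarrow> 'a) \<Rightarrow> 'a \<Rightarrow> 'a" where
  "sstar cs s = cs (\<lambda>j. s ^ j) UNIV"

text \<open>Matrices in (S^{n\<times>n})^{\<Gamma>^*\<times>\<Gamma>^*}: blocks indexed by pairs of
words, each block an n\<times>n matrix with row/column index type 'n (n = CARD('n)).\<close>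
type_synonym ('a, 'g, 'n) pdmat = "'g list \<Rightarrow> 'g list \<Rightarrow> 'n \<Rightarrow> 'n \<Rightarrow> 'a"

definition bmult :: "('n::finite \<Rightarrow> 'n \<Rightarrow> 'a::semiring_1) \<Rightarrow> ('n \<Rightarrow> 'n \<Rightarrow> 'a) \<Rightarrow> 'n \<Rightarrow> 'n \<Rightarrow> 'a" where
  "bmult X Y = (\<lambda>i j. \<Sum>k\<in>UNIV. X i k * Y k j)"

definition mmult :: "((nat \<Rightarrow> 'a::semiring_1) \<Rightarrow> nat set \<Rightarrow> 'a) \<Rightarrow>
    ('a, 'g::countable, 'n::finite) pdmat \<Rightarrow> ('a, 'g, 'n) pdmat \<Rightarrow> ('a, 'g, 'n) pdmat" where
  "mmult cs A B = (\<lambda>\<pi>1 \<pi>2 i j. gsum cs (\<lambda>(\<pi>, k). A \<pi>1 \<pi> i k * B \<pi> \<pi>2 k j) UNIV)"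

definition mone :: "('a::semiring_1, 'g, 'n) pdmat" where
  "mone = (\<lambda>\<pi>1 \<pi>2 i j. if \<pi>1 = \<pi>2 \<and> i = j then 1 else 0)"

primrec mpow :: "((nat \<Rightarrow> 'a::semiring_1) \<Rightarrow> nat set \<Rightarrow> 'a) \<Rightarrow>
    ('a, 'g::countable, 'n::finite) pdmat \<Rightarrow> nat \<Rightarrow> ('a, 'g, 'n) pdmat" where
  "mpow cs M 0 = mone"
| "mpow cs M (Suc m) = mmult cs (mpow cs M m) M"

definition mstar :: "((nat \<Rightarrow> 'a::semiring_1) \<Rightarrow> nat set \<Rightarrow> 'a) \<Rightarrow>
    ('a, 'g::countable, 'n::finite) pdmat \<Rightarrow> ('a, 'g, 'n) pdmat" where
  "mstar cs M = (\<lambda>\<pi>1 \<pi>2 i j. cs (\<lambda>m. mpow cs M m \<pi>1 \<pi>2 i j) UNIV)"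

definition pushdown_tm :: "('a::zero, 'g, 'n) pdmat \<Rightarrow> bool" where
  "pushdown_tm M \<longleftrightarrow>
     (\<forall>p. finite {\<pi>. M [p] \<pi> \<noteq> (\<lambda>i j. 0)}) \<and>
     (\<forall>p \<pi> \<pi>'. M (p # \<pi>') (\<pi> @ \<pi>') = M [p] \<pi>) \<and>
     (\<forall>\<pi>1 \<pi>2. \<not> (\<exists>p \<pi> \<pi>'. \<pi>1 = p # \<pi>' \<and> \<pi>2 = \<pi> @ \<pi>') \<longrightarrow> M \<pi>1 \<pi>2 = (\<lambda>i j. 0))"

end

theory Submission
  imports Defs
begin

text \<open>Every step of a pushdown transition matrix rewrites only the topmost stack symbol, and no
step starts from the empty stack. Hence a computation of length \<open>m\<close> from \<open>\<rho>\<pi>\<close> to the empty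
stack first empties \<open>\<rho>\<close> in some \<open>t \<le> m\<close> steps without touching \<open>\<pi>\<close>, and then empties \<open>\<pi>\<close>
in the remaining \<open>m - t\<close> steps: the \<open>(\<rho>\<pi>, \<epsilon>)\<close>-block of \<open>M^m\<close> is the sum over \<open>t \<le> m\<close> of
the \<open>(\<rho>, \<epsilon>)\<close>-block of \<open>M^t\<close> times the \<open>(\<pi>, \<epsilon>)\<close>-block of \<open>M^(m-t)\<close>. Summing over \<open>m\<close>
gives a Cauchy product, which infinite associativity and distributivity factor into the
product of the two blocks of \<open>M\<^sup>*\<close>.\<close>

lemma bmult_assoc: "bmult (bmult X Y) Z = bmult X (bmult Y Z)"
  unfolding bmult_def
  by (intro ext) (simp add: sum_distrib_left sum_distrib_right mult.assoc, rule sum.swap)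

lemma bmult_sum_right:
  "finite T \<Longrightarrow> bmult X (\<lambda>i j. \<Sum>t\<in>T. Y t i j) = (\<lambda>i j. \<Sum>t\<in>T. bmult X (Y t) i j)"
  unfolding bmult_def
  by (intro ext) (simp add: sum_distrib_left, rule sum.swap)

lemma bmult_zero_left: "bmult (\<lambda>i j. 0) Y = (\<lambda>i j. 0)"
  by (simp add: bmult_def)

lemma bmult_one_left: "bmult (\<lambda>i j. if i = j then 1 else 0) Y = Y"
proof (intro ext)
  fix i j
  have "(\<Sum>k\<in>UNIV. (if i = k then 1 else 0) * Y k j) = (\<Sum>k\<in>UNIV. if i = k then Y k j else 0)"
    by (intro sum.cong) auto
  then show "bmult (\<lambda>i j. if i = j then 1 else 0) Y i j = Y i j" by (simp add: bmult_def)
qed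

lemma pushdown_tm_Nil: "pushdown_tm M \<Longrightarrow> M [] \<sigma> = (\<lambda>i j. 0)"
  unfolding pushdown_tm_def by auto

lemma pushdown_tm_Cons: "pushdown_tm M \<Longrightarrow> M (a # w) (\<tau> @ w) = M [a] \<tau>"
  unfolding pushdown_tm_def by auto

lemma pushdown_tm_Cons_zero:
  "pushdown_tm M \<Longrightarrow> \<sigma> \<notin> range (\<lambda>\<tau>. \<tau> @ w) \<Longrightarrow> M (a # w) \<sigma> = (\<lambda>i j. 0)"
  unfolding pushdown_tm_def by blast

context complete_semiring begin

lemma gsum_cong:
  "(\<And>x. x \<in> I \<Longrightarrow> f x = g x) \<Longrightarrow> gsum csum f I = gsum csum g I"
  unfolding gsum_def by (rule csum_cong) auto

lemma gsum_single: "gsum csum f {x} = f x"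
  unfolding gsum_def by (simp add: csum_single)

lemma gsum_empty: "gsum csum f {} = 0"
  unfolding gsum_def by (simp add: csum_empty)

lemma gsum_pair: "x \<noteq> y \<Longrightarrow> gsum csum f {x, y} = f x + f y"
  unfolding gsum_def by (simp add: csum_pair)

lemma gsum_distrib_left: "gsum csum (\<lambda>i. a * f i) I = a * gsum csum f I"
  unfolding gsum_def by (rule csum_distrib_left)

lemma gsum_distrib_right: "gsum csum (\<lambda>i. f i * a) I = gsum csum f I * a"
  unfolding gsum_def by (rule csum_distrib_right)

lemma gsum_partition:
  assumes "\<forall>j\<in>J. \<forall>k\<in>J. j \<noteq> k \<longrightarrow> P j \<inter> P k = {}"
  shows "gsum csum f (\<Union>j\<in>J. P j) = gsum csum (\<lambda>j. gsum csum f (P j)) J"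
proof -
  have image_Union: "to_nat ` (\<Union>j\<in>J. P j) = (\<Union>k\<in>to_nat ` J. to_nat ` P (from_nat k))"
    by auto
  have "\<forall>j\<in>to_nat ` J. \<forall>k\<in>to_nat ` J. j \<noteq> k \<longrightarrow>
      to_nat ` P (from_nat j) \<inter> to_nat ` P (from_nat k) = {}"
  proof (intro ballI impI)
    fix j k assume "j \<in> to_nat ` J" "k \<in> to_nat ` J" "j \<noteq> k"
    then obtain x y where "x \<in> J" "y \<in> J" "x \<noteq> y" "j = to_nat x" "k = to_nat y" by auto
    then have "P (from_nat j) \<inter> P (from_nat k) = {}" using assms by auto
    then show "to_nat ` P (from_nat j) \<inter> to_nat ` P (from_nat k) = {}"
      by (auto dest: inj_onD[OF inj_to_nat])
  qed
  then show ?thesis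
    unfolding gsum_def image_Union by (subst csum_partition) simp_all
qed

lemma gsum_zero: "(\<And>x. x \<in> I \<Longrightarrow> f x = 0) \<Longrightarrow> gsum csum f I = 0"
proof -
  assume "\<And>x. x \<in> I \<Longrightarrow> f x = 0"
  then have "gsum csum f I = gsum csum (\<lambda>x. 0 * (0::'a)) I" by (intro gsum_cong) auto
  also have "\<dots> = 0" by (subst gsum_distrib_left) simp
  finally show ?thesis .
qed

lemma gsum_Un_disjoint:
  assumes "A \<inter> B = {}"
  shows "gsum csum f (A \<union> B) = gsum csum f A + gsum csum f B"
proof -
  have "A \<union> B = (\<Union>b\<in>{True, False}. if b then A else B)" by auto
  then have "gsum csum f (A \<union> B) = gsum csum (\<lambda>b. gsum csum f (if b then A else B)) {True, False}"
    using gsum_partition[of "{True, False}" "\<lambda>b. if b then A else B" f] assms by auto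
  also have "\<dots> = gsum csum f A + gsum csum f B" by (subst gsum_pair) auto
  finally show ?thesis .
qed

lemma gsum_finite: "finite I \<Longrightarrow> gsum csum f I = sum f I"
proof (induction I rule: finite_induct)
  case empty
  then show ?case by (simp add: gsum_empty)
next
  case (insert x F)
  then have "gsum csum f ({x} \<union> F) = f x + gsum csum f F"
    by (subst gsum_Un_disjoint) (auto simp: gsum_single)
  with insert show ?case by simp
qed

lemma gsum_mono_neutral:
  assumes "B \<subseteq> A" "\<And>x. x \<in> A - B \<Longrightarrow> f x = 0"
  shows "gsum csum f A = gsum csum f B"
proof -
  have "A = B \<union> (A - B)" using assms by auto
  then have "gsum csum f A = gsum csum f B + gsum csum f (A - B)"
    by (metis Diff_disjoint gsum_Un_disjoint)
  then show ?thesis using gsum_zero[of "A - B" f] assms by simp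
qed

lemma gsum_reindex:
  assumes "inj_on h I"
  shows "gsum csum f (h ` I) = gsum csum (\<lambda>i. f (h i)) I"
proof -
  have "h ` I = (\<Union>i\<in>I. {h i})" by auto
  then show ?thesis using gsum_partition[of I "\<lambda>i. {h i}" f] assms
    by (auto simp: gsum_single dest: inj_onD)
qed

lemma gsum_Sigma:
  "gsum csum f (Sigma A B) = gsum csum (\<lambda>a. gsum csum (\<lambda>b. f (a, b)) (B a)) A"
proof -
  have "Sigma A B = (\<Union>a\<in>A. Pair a ` B a)" by auto
  then have "gsum csum f (Sigma A B) = gsum csum (\<lambda>a. gsum csum f (Pair a ` B a)) A"
    using gsum_partition[of A "\<lambda>a. Pair a ` B a" f] by auto
  also have "\<dots> = gsum csum (\<lambda>a. gsum csum (\<lambda>b. f (a, b)) (B a)) A"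
    by (intro gsum_cong) (simp add: gsum_reindex inj_on_def)
  finally show ?thesis .
qed

lemma gsum_swap:
  "gsum csum (\<lambda>a. gsum csum (\<lambda>b. f a b) B) A = gsum csum (\<lambda>b. gsum csum (\<lambda>a. f a b) A) B"
proof -
  have "gsum csum (\<lambda>a. gsum csum (\<lambda>b. f a b) B) A = gsum csum (\<lambda>(a, b). f a b) (A \<times> B)"
    by (simp add: gsum_Sigma)
  also have "A \<times> B = prod.swap ` (B \<times> A)" by auto
  also have "gsum csum (\<lambda>(a, b). f a b) (prod.swap ` (B \<times> A)) = gsum csum (\<lambda>(b, a). f a b) (B \<times> A)"
    by (subst gsum_reindex) (auto simp: case_prod_beta intro: gsum_cong)
  also have "\<dots> = gsum csum (\<lambda>b. gsum csum (\<lambda>a. f a b) A) B"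
    by (simp add: gsum_Sigma)
  finally show ?thesis .
qed

lemma gsum_sum:
  fixes K :: "'k::countable set"
  shows "finite K \<Longrightarrow> gsum csum (\<lambda>x. \<Sum>k\<in>K. f x k) I = (\<Sum>k\<in>K. gsum csum (\<lambda>x. f x k) I)"
  using gsum_swap[of f K I] by (simp add: gsum_finite)

lemma csum_eq_gsum: "csum f I = gsum csum f I"
proof -
  have "to_nat ` I = (\<Union>j\<in>I. {to_nat j})" by auto
  then have "gsum csum f I = csum (\<lambda>j. csum (\<lambda>k. f (from_nat k)) {to_nat j}) I"
    unfolding gsum_def by (simp add: csum_partition)
  then show ?thesis by (simp add: csum_single)
qed

lemma gsum_Cauchy_product:
  fixes f :: "nat \<Rightarrow> nat \<Rightarrow> 'a"
  shows "gsum csum (\<lambda>m. \<Sum>t\<le>m. f t (m - t)) UNIV = gsum csum (\<lambda>t. gsum csum (f t) UNIV) UNIV"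
proof -
  have UNIV_diagonals: "(UNIV :: (nat \<times> nat) set) = (\<Union>m. {p. fst p + snd p = m})" by auto
  have diagonal: "{p. fst p + snd p = m} = (\<lambda>t. (t, m - t)) ` {..m}" for m :: nat by force
  have "gsum csum (\<lambda>t. gsum csum (f t) UNIV) UNIV = gsum csum (case_prod f) UNIV"
    using gsum_Sigma[of "case_prod f" UNIV "\<lambda>_. UNIV"] by simp
  also have "\<dots> = gsum csum (\<lambda>m. gsum csum (case_prod f) {p. fst p + snd p = m}) UNIV"
    by (subst UNIV_diagonals, rule gsum_partition) auto
  also have "\<dots> = gsum csum (\<lambda>m. \<Sum>t\<le>m. f t (m - t)) UNIV"
    by (intro gsum_cong) (simp add: diagonal gsum_finite sum.reindex inj_on_def)
  finally show ?thesis ..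
qed

lemma gsum_bmult_left:
  "gsum csum (\<lambda>x. bmult (X x) Y i j) I = bmult (\<lambda>i k. gsum csum (\<lambda>x. X x i k) I) Y i j"
  by (simp add: bmult_def gsum_sum gsum_distrib_right)

lemma gsum_bmult_right:
  "gsum csum (\<lambda>x. bmult X (Y x) i j) I = bmult X (\<lambda>k j. gsum csum (\<lambda>x. Y x k j) I) i j"
  by (simp add: bmult_def gsum_sum gsum_distrib_left)

lemma mmult_eq_gsum_bmult:
  "mmult csum A B x y i j = gsum csum (\<lambda>\<pi>. bmult (A x \<pi>) (B \<pi> y) i j) UNIV"
  unfolding mmult_def gsum_Sigma[of _ UNIV "\<lambda>_. UNIV", simplified]
  by (simp add: gsum_finite bmult_def)

lemma mmult_assoc: "mmult csum (mmult csum A B) C = mmult csum A (mmult csum B C)"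
proof (intro ext)
  fix x y i j
  have "mmult csum (mmult csum A B) C x y i j =
      gsum csum (\<lambda>\<sigma>. gsum csum (\<lambda>\<pi>. bmult (bmult (A x \<pi>) (B \<pi> \<sigma>)) (C \<sigma> y) i j) UNIV) UNIV"
    by (simp add: mmult_eq_gsum_bmult[abs_def] gsum_bmult_left)
  also have "\<dots> = gsum csum (\<lambda>\<pi>. gsum csum (\<lambda>\<sigma>. bmult (A x \<pi>) (bmult (B \<pi> \<sigma>) (C \<sigma> y)) i j) UNIV) UNIV"
    by (subst gsum_swap) (simp add: bmult_assoc)
  also have "\<dots> = mmult csum A (mmult csum B C) x y i j"
    by (simp add: mmult_eq_gsum_bmult[abs_def] gsum_bmult_right)
  finally show "mmult csum (mmult csum A B) C x y i j = mmult csum A (mmult csum B C) x y i j" .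
qed

lemma mmult_mone_left: "mmult csum mone B = B"
proof (intro ext)
  fix x y i j
  have "mmult csum mone B x y i j = gsum csum (\<lambda>(\<pi>, k). mone x \<pi> i k * B \<pi> y k j) {(x, i)}"
    unfolding mmult_def by (rule gsum_mono_neutral) (auto simp: mone_def split: if_splits)
  then show "mmult csum mone B x y i j = B x y i j" by (simp add: gsum_single mone_def)
qed

lemma mmult_mone_right: "mmult csum B mone = B"
proof (intro ext)
  fix x y i j
  have "mmult csum B mone x y i j = gsum csum (\<lambda>(\<pi>, k). B x \<pi> i k * mone \<pi> y k j) {(y, j)}"
    unfolding mmult_def by (rule gsum_mono_neutral) (auto simp: mone_def split: if_splits)
  then show "mmult csum B mone x y i j = B x y i j" by (simp add: gsum_single mone_def)
qed

lemma mpow_Suc_left: "mpow csum M (Suc m) = mmult csum M (mpow csum M m)"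
  by (induction m) (simp_all add: mmult_mone_left mmult_mone_right mmult_assoc)

lemma mmult_pushdown_Cons:
  assumes "pushdown_tm M"
  shows "mmult csum M X (a # w) y i j = gsum csum (\<lambda>\<tau>. bmult (M [a] \<tau>) (X (\<tau> @ w) y) i j) UNIV"
proof -
  have "mmult csum M X (a # w) y i j
      = gsum csum (\<lambda>\<sigma>. bmult (M (a # w) \<sigma>) (X \<sigma> y) i j) (range (\<lambda>\<tau>. \<tau> @ w))"
    unfolding mmult_eq_gsum_bmult
    by (rule gsum_mono_neutral) (auto simp: pushdown_tm_Cons_zero[OF assms] bmult_zero_left)
  also have "\<dots> = gsum csum (\<lambda>\<tau>. bmult (M [a] \<tau>) (X (\<tau> @ w) y) i j) UNIV"
    by (subst gsum_reindex) (auto simp: inj_on_def pushdown_tm_Cons[OF assms])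
  finally show ?thesis .
qed

lemma mpow_pushdown_Nil:
  assumes "pushdown_tm M"
  shows "mpow csum M t [] \<sigma> = (if t = 0 then mone [] \<sigma> else (\<lambda>i j. 0))"
proof (cases t)
  case (Suc s)
  then show ?thesis
    by (intro ext) (simp only: mpow_Suc_left mmult_eq_gsum_bmult,
        simp add: pushdown_tm_Nil[OF assms] bmult_zero_left gsum_zero)
qed simp

lemma mpow_pushdown_append_Nil:
  assumes pd: "pushdown_tm M"
  shows "mpow csum M m (\<rho> @ \<pi>) [] =
    (\<lambda>i j. \<Sum>t\<le>m. bmult (mpow csum M t \<rho> []) (mpow csum M (m - t) \<pi> []) i j)"
proof (induction m arbitrary: \<rho>)
  case 0
  then show ?case
    by (cases \<rho>) (simp_all add: mone_def bmult_one_left bmult_zero_left)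
next
  case (Suc m)
  show ?case
  proof (cases \<rho>)
    case Nil
    then show ?thesis
      by (simp only: sum.atMost_Suc_shift mpow_pushdown_Nil[OF pd])
         (simp add: mone_def bmult_one_left bmult_zero_left)
  next
    case (Cons a r)
    let ?B = "\<lambda>t. mpow csum M (m - t) \<pi> []"
    have "mpow csum M (Suc m) (\<rho> @ \<pi>) [] i j =
        gsum csum (\<lambda>\<tau>. bmult (M [a] \<tau>) (mpow csum M m (\<tau> @ r @ \<pi>) []) i j) UNIV" for i j
      by (simp add: Cons mpow_Suc_left mmult_pushdown_Cons[OF pd] del: mpow.simps(2))
    also have "\<dots> i j = (\<Sum>t\<le>m. gsum csum
        (\<lambda>\<tau>. bmult (bmult (M [a] \<tau>) (mpow csum M t (\<tau> @ r) [])) (?B t) i j) UNIV)" for i j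
      using Suc.IH[of "_ @ r"] by (simp add: bmult_sum_right bmult_assoc gsum_sum)
    also have "\<dots> i j = (\<Sum>t\<le>m. bmult (mpow csum M (Suc t) \<rho> []) (?B t) i j)" for i j
      by (simp add: gsum_bmult_left Cons mpow_Suc_left mmult_pushdown_Cons[OF pd, abs_def]
          del: mpow.simps(2))
    finally show ?thesis
      by (intro ext) (simp only: sum.atMost_Suc_shift, simp add: Cons mone_def bmult_zero_left)
  qed
qed

end

theorem theorem1:
  fixes cs :: "(nat \<Rightarrow> 'a::semiring_1) \<Rightarrow> nat set \<Rightarrow> 'a"
    and M :: "('a, 'g::finite, 'n::finite) pdmat"
  assumes "complete_semiring cs"
    and "pushdown_tm M"
  shows "mstar cs M (p # \<pi>) [] = bmult (mstar cs M [p] []) (mstar cs M \<pi> [])"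
proof (intro ext)
  interpret complete_semiring cs by fact
  fix i j
  have "mstar cs M (p # \<pi>) [] i j = gsum cs (\<lambda>m. mpow cs M m ([p] @ \<pi>) [] i j) UNIV"
    by (simp add: mstar_def csum_eq_gsum)
  also have "\<dots> = gsum cs (\<lambda>t. gsum cs (\<lambda>s. bmult (mpow cs M t [p] []) (mpow cs M s \<pi> []) i j) UNIV) UNIV"
    unfolding mpow_pushdown_append_Nil[OF assms(2)] by (rule gsum_Cauchy_product)
  also have "\<dots> = bmult (mstar cs M [p] []) (mstar cs M \<pi> []) i j"
    by (simp add: gsum_bmult_left gsum_bmult_right mstar_def csum_eq_gsum)
  finally show "mstar cs M (p # \<pi>) [] i j = bmult (mstar cs M [p] []) (mstar cs M \<pi> []) i j" .
qed

end
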